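(* Let $m,n\ge1$ be integers, $A=(a_{ij})$ an $n\times m$ real matrix and $q_{\max}>1$. Let $\gamma$ be such that every $m$-tuple $q_1,\dots,q_m$ returned by the ILLL-algorithm on input $A,q_{\max}$ satisfies $q^{\frac{m}{n}}\max_i\|q_1a_{i1}+\dots+q_ma_{im}\|>\gamma$, where $q=\max_j|q_j|$. Put $$\delta=2^{-\frac{(m+n)(m^2+m(3n-1)+4n+2n^2)}{4n^2}}\,m^{-\frac{m}{2n}}\,n^{-\frac12}\,\gamma^{\frac{m+n}{n}}.$$ Then every $m$-tuple of integers $s_1,\dots,s_m$ with $s=\max_j|s_j|$ and $$2^{\frac{(m+n-1)n}{4m}}\left(\frac{n\delta^2}{m}\right)^{\frac{n}{2(m+n)}}<s<2^{-\frac{m^2+m(n-1)+4n}{4m}}\left(\frac{n\delta^2}{m}\right)^{\frac{n}{2(m+n)}}q_{\max}$$ satisfies $s^{\frac{m}{n}}\max_i\|s_1a_{i1}+\dots+s_ma_{im}\|>\delta$.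
   Context: $\|x\|$ denotes the distance from $x\in\mathbb R$ to the nearest integer. A basis $b_1,\dots,b_r$ of $\mathbb R^r$ with Gram–Schmidt vectors $b_i^*=b_i-\sum_{j<i}\mu_{ij}b_j^*$, $\mu_{ij}=(b_i,b_j^* )/(b_j^*,b_j^* )$, is reduced if $|\mu_{ij}|\le\frac12$ ($j<i$) and $|b_i^*+\mu_{i,i-1}b_{i-1}^*|^2\ge\frac34|b_{i-1}^*|^2$ ($1<i\le r$); the LLL-algorithm returns a reduced basis of the lattice generated by its input basis. The ILLL-algorithm on input $A$ and $q_{\max}>1$: put $k'=\left\lceil -\frac{(m+n-1)(m+n)}{4n}+\frac{m\log_2 q_{\max}}{n}\right\rceil$ and, for $k\ge1$, $c(k)=\left(2^{-\frac{m+n+3}{4}-k+1}\right)^{\frac{m+n}{m}}$. Start with the basis given by the columns of $B=\begin{pmatrix} I_n & A\\ 0& c(1)I_m\end{pmatrix}$. In iteration $k=1,\dots,k'$: apply the LLL-algorithm to the current basis; from the first vector of the reduced basis, which has the form $(q_1a_{11}+\dots+q_ma_{1m}-p_1,\dots,q_1a_{n1}+\dots+q_ma_{nm}-p_n,c(k)q_1,\dots,c(k)q_m)^T$ with $p_i,q_j\in\mathbb Z$, output the $m$-tuple $q(k)=(q_1,\dots,q_m)$; then divide the last $m$ coordinates of all basis vectors by $2^{\frac{m+n}{m}}$. The $m$-tuples returned are $q(1),\dots,q(k')$. *)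

theory Defs
  imports Complex_Main
begin

text \<open>Vectors of R^r are functions nat => real (only coordinates < r matter);
  a family of r vectors is b :: nat => (nat => real), vector i is b i for i < r.
  Coordinates are 0-based.\<close>

definition ip :: "nat \<Rightarrow> (nat \<Rightarrow> real) \<Rightarrow> (nat \<Rightarrow> real) \<Rightarrow> real" where
  "ip r x y = (\<Sum>t<r. x t * y t)"

fun gso :: "nat \<Rightarrow> (nat \<Rightarrow> nat \<Rightarrow> real) \<Rightarrow> nat \<Rightarrow> nat \<Rightarrow> real" where
  "gso r b i = (\<lambda>t. b i t -
     (\<Sum>j\<in>{..<i}. (ip r (b i) (gso r b j) / ip r (gso r b j) (gso r b j)) * gso r b j t))"

declare gso.simps [simp del]

definition gs_mu :: "nat \<Rightarrow> (nat \<Rightarrow> nat \<Rightarrow> real) \<Rightarrow> nat \<Rightarrow> nat \<Rightarrow> real" where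
  "gs_mu r b i j = ip r (b i) (gso r b j) / ip r (gso r b j) (gso r b j)"

definition reduced :: "nat \<Rightarrow> (nat \<Rightarrow> nat \<Rightarrow> real) \<Rightarrow> bool" where
  "reduced r b \<longleftrightarrow>
     (\<forall>i<r. \<forall>j<i. \<bar>gs_mu r b i j\<bar> \<le> 1/2) \<and>
     (\<forall>i. 1 \<le> i \<and> i < r \<longrightarrow>
        ip r (\<lambda>t. gso r b i t + gs_mu r b i (i-1) * gso r b (i-1) t)
             (\<lambda>t. gso r b i t + gs_mu r b i (i-1) * gso r b (i-1) t)
        \<ge> 3/4 * ip r (gso r b (i-1)) (gso r b (i-1)))"

definition lattice :: "nat \<Rightarrow> (nat \<Rightarrow> nat \<Rightarrow> real) \<Rightarrow> (nat \<Rightarrow> real) set" where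
  "lattice r b = {v. \<exists>c::nat \<Rightarrow> int. v = (\<lambda>t. \<Sum>i<r. of_int (c i) * b i t)}"

definition dnint :: "real \<Rightarrow> real" where
  "dnint x = \<bar>x - of_int (round x)\<bar>"

definition kprime :: "nat \<Rightarrow> nat \<Rightarrow> real \<Rightarrow> int" where
  "kprime m n qmax = \<lceil>- (real (m+n) - 1) * real (m+n) / (4 * real n)
                       + real m * log 2 qmax / real n\<rceil>"

definition cfac :: "nat \<Rightarrow> nat \<Rightarrow> nat \<Rightarrow> real" where
  "cfac m n k = (2 powr (- (real (m+n) + 3) / 4 - real k + 1)) powr (real (m+n) / real m)"

text \<open>Initial basis: columns of [[I_n, A],[0, c(1) I_m]]; column i is vector i.\<close>
definition init_basis :: "nat \<Rightarrow> nat \<Rightarrow> (nat \<Rightarrow> nat \<Rightarrow> real) \<Rightarrow> nat \<Rightarrow> nat \<Rightarrow> real" where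
  "init_basis m n A i t =
     (if i < n then (if t = i then 1 else 0)
      else if t < n then A t (i - n)
      else if t < n + m \<and> t = i then cfac m n 1 else 0)"

definition scale_basis :: "nat \<Rightarrow> nat \<Rightarrow> (nat \<Rightarrow> nat \<Rightarrow> real) \<Rightarrow> nat \<Rightarrow> nat \<Rightarrow> real" where
  "scale_basis m n b i t = (if n \<le> t then b i t / 2 powr (real (m+n) / real m) else b i t)"

text \<open>A run of the ILLL-algorithm on input A, qmax: L k is the reduced basis returned
  by the LLL-algorithm in iteration k (1 \<le> k \<le> k'), and qs k is the m-tuple q(k) output
  in iteration k.  Any admissible output of the LLL step is allowed.\<close>
definition ILLL_run :: "nat \<Rightarrow> nat \<Rightarrow> (nat \<Rightarrow> nat \<Rightarrow> real) \<Rightarrow> real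
     \<Rightarrow> (nat \<Rightarrow> nat \<Rightarrow> nat \<Rightarrow> real) \<Rightarrow> (nat \<Rightarrow> nat \<Rightarrow> int) \<Rightarrow> bool" where
  "ILLL_run m n A qmax L qs \<longleftrightarrow>
     (\<forall>k. 1 \<le> k \<and> int k \<le> kprime m n qmax \<longrightarrow>
        reduced (m+n) (L k) \<and>
        lattice (m+n) (L k) =
          lattice (m+n) (if k = 1 then init_basis m n A else scale_basis m n (L (k-1))) \<and>
        (\<exists>p::nat \<Rightarrow> int. \<forall>t<m+n.
           L k 0 t = (if t < n then (\<Sum>j<m. of_int (qs k j) * A t j) - of_int (p t)
                      else cfac m n k * of_int (qs k (t - n)))))"

end

theory Submission
  imports Defs "Jordan_Normal_Form.Determinant"
begin

text \<open>Suppose some \<open>s\<close> in the window had \<open>s\<^bsup>m/n\<^esup> max\<^sub>i \<parallel>s\<^sub>1a\<^sub>i\<^sub>1 + \<dots> + s\<^sub>ma\<^sub>i\<^sub>m\<parallel> \<le> \<delta>\<close>.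
  The lattice of iteration \<open>k\<close> of the ILLL-algorithm is generated by \<open>[[I\<^sub>n, A], [0, c(k) I\<^sub>m]]\<close>
  and has determinant \<open>c(k)\<^sup>m\<close>. Choose \<open>k\<close> with \<open>c(k)\<^sup>2 s\<^bsup>2(m+n)/n\<^esup> \<approx> n\<delta>\<^sup>2/m\<close>; the window
  for \<open>s\<close> is what places \<open>k\<close> between \<open>1\<close> and \<open>k'\<close>. Then the lattice vector
  \<open>(sA - p, c(k) s)\<close>, \<open>p\<close> the nearest integers, has squared length at most \<open>2T\<close> with
  \<open>T = n\<delta>\<^sup>2 s\<^bsup>-2m/n\<^esup>\<close>, so the first vector \<open>b\<close> of the reduced basis satisfies
  \<open>|b|\<^sup>2 \<le> 2\<^bsup>m+n\<^esup> T\<close>. The coordinates of \<open>b\<close> are the errors of \<open>q(k)\<close> and \<open>c(k) q(k)\<close>, so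
  the hypothesis on \<open>q(k)\<close> gives \<open>\<gamma>\<^bsup>2n\<^esup> c(k)\<^bsup>2m\<^esup> < |b|\<^bsup>2(m+n)\<^esup>\<close>, while Hermite's bound for
  reduced bases gives \<open>|b|\<^bsup>2(m+n)\<^esup> \<le> 2\<^bsup>(m+n)(m+n-1)/2\<^esup> c(k)\<^bsup>2m\<^esup>\<close>. The constant \<open>\<delta>\<close> is
  exactly the threshold at which these three inequalities become incompatible.\<close>

section \<open>Gram-Schmidt orthogonalisation\<close>

lemma ip_commute: "ip r x y = ip r y x"
  unfolding ip_def by (simp add: mult.commute)

lemma ip_add_left: "ip r (\<lambda>t. x t + y t) z = ip r x z + ip r y z"
  unfolding ip_def by (simp add: algebra_simps sum.distrib)

lemma ip_diff_left: "ip r (\<lambda>t. x t - y t) z = ip r x z - ip r y z"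
  unfolding ip_def by (simp add: algebra_simps sum_subtractf)

lemma ip_scale_left: "ip r (\<lambda>t. a * x t) z = a * ip r x z"
  unfolding ip_def by (simp add: algebra_simps sum_distrib_left)

lemma ip_sum_left: "ip r (\<lambda>t. \<Sum>j\<in>J. f j t) z = (\<Sum>j\<in>J. ip r (f j) z)"
  unfolding ip_def by (simp add: sum_distrib_right sum.swap[of _ J])

lemma ip_self_nonneg: "0 \<le> ip r x x"
  unfolding ip_def by (simp add: sum_nonneg)

lemma ip_self_eq_0_imp_orthogonal: "ip r x x = 0 \<Longrightarrow> ip r y x = 0"
  unfolding ip_def by (simp add: sum_nonneg_eq_0_iff)

lemma ip_add_scaled_self:
  "ip r (\<lambda>t. x t + a * y t) (\<lambda>t. x t + a * y t) = ip r x x + 2 * a * ip r x y + a\<^sup>2 * ip r y y"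
  unfolding ip_def by (simp add: algebra_simps power2_eq_square sum.distrib sum_distrib_left)

lemma gso_eq: "gso r b i = (\<lambda>t. b i t - (\<Sum>j<i. gs_mu r b i j * gso r b j t))"
  by (subst gso.simps) (simp add: gs_mu_def)

lemma gso_0: "gso r b 0 = b 0"
  by (subst gso.simps) simp

lemma basis_eq_gso_sum: "b i t = gso r b i t + (\<Sum>j<i. gs_mu r b i j * gso r b j t)"
  by (subst gso_eq) simp

lemma gso_orthogonal: "j < i \<Longrightarrow> ip r (gso r b i) (gso r b j) = 0"
proof (induction i arbitrary: j rule: less_induct)
  case (less i)
  have orth: "ip r (gso r b l) (gso r b j) = 0" if "l < i" "l \<noteq> j" for l
    using less.IH less.prems that by (metis ip_commute nat_neq_iff)
  have "ip r (gso r b i) (gso r b j) =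
      ip r (b i) (gso r b j) - (\<Sum>l<i. gs_mu r b i l * ip r (gso r b l) (gso r b j))"
    by (subst gso_eq) (simp add: ip_diff_left ip_sum_left ip_scale_left)
  also have "(\<Sum>l<i. gs_mu r b i l * ip r (gso r b l) (gso r b j))
      = gs_mu r b i j * ip r (gso r b j) (gso r b j)"
    by (rule sum.remove[where x=j, THEN trans]) (use less.prems orth in auto)
  finally show ?case
    by (cases "ip r (gso r b j) (gso r b j) = 0")
       (auto simp: gs_mu_def ip_self_eq_0_imp_orthogonal)
qed

lemma gso_orthogonal': "i \<noteq> j \<Longrightarrow> ip r (gso r b i) (gso r b j) = 0"
  by (metis gso_orthogonal ip_commute nat_neq_iff)

lemma ip_basis_gso:
  assumes "i \<le> j"
  shows "ip r (b i) (gso r b j) = (if i = j then ip r (gso r b j) (gso r b j) else 0)"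
proof -
  have "ip r (b i) (gso r b j) = ip r (gso r b i) (gso r b j)
      + (\<Sum>l<i. gs_mu r b i l * ip r (gso r b l) (gso r b j))"
    by (subst basis_eq_gso_sum[abs_def]) (simp add: ip_add_left ip_sum_left ip_scale_left)
  also have "(\<Sum>l<i. gs_mu r b i l * ip r (gso r b l) (gso r b j)) = 0"
    using assms by (intro sum.neutral) (auto simp: gso_orthogonal')
  finally show ?thesis using assms by (auto simp: gso_orthogonal')
qed

section \<open>Reduced bases\<close>

text \<open>The size and Lovasz conditions combine to
  |b*_i|^2 \<ge> (3/4 - \<mu>^2) |b*_{i-1}|^2 \<ge> |b*_{i-1}|^2 / 2.\<close>
lemma reduced_gso_step:
  assumes "reduced r b" "1 \<le> i" "i < r"
  shows "ip r (gso r b (i-1)) (gso r b (i-1)) \<le> 2 * ip r (gso r b i) (gso r b i)"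
proof -
  let ?g = "gso r b i" and ?h = "gso r b (i-1)" and ?\<mu> = "gs_mu r b i (i-1)"
  have "\<bar>?\<mu>\<bar> \<le> 1/2" using assms unfolding reduced_def by auto
  then have "?\<mu>\<^sup>2 \<le> (1/2)\<^sup>2" by (metis power2_abs abs_ge_zero power_mono)
  then have \<mu>: "?\<mu>\<^sup>2 * ip r ?h ?h \<le> 1/4 * ip r ?h ?h"
    using ip_self_nonneg[of r ?h] by (intro mult_right_mono) (auto simp: power2_eq_square)
  have "3/4 * ip r ?h ?h \<le> ip r (\<lambda>t. ?g t + ?\<mu> * ?h t) (\<lambda>t. ?g t + ?\<mu> * ?h t)"
    using assms unfolding reduced_def by auto
  also have "\<dots> = ip r ?g ?g + ?\<mu>\<^sup>2 * ip r ?h ?h"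
    using gso_orthogonal[of "i-1" i r b] assms by (simp add: ip_add_scaled_self)
  finally show ?thesis using \<mu> by linarith
qed

lemma reduced_first_le_gso:
  assumes "reduced r b" "i < r"
  shows "ip r (b 0) (b 0) \<le> 2^i * ip r (gso r b i) (gso r b i)"
  using assms(2)
proof (induction i)
  case 0 then show ?case by (simp add: gso_0)
next
  case (Suc i)
  have "ip r (b 0) (b 0) \<le> 2^i * ip r (gso r b i) (gso r b i)" using Suc by simp
  also have "\<dots> \<le> 2^i * (2 * ip r (gso r b (Suc i)) (gso r b (Suc i)))"
    using reduced_gso_step[OF assms(1), of "Suc i"] Suc by (intro mult_left_mono) auto
  finally show ?case by simp
qed

text \<open>The component of \<open>v\<close> along \<open>b\<^sup>*\<^sub>J\<close> is \<open>c\<^sub>J b\<^sup>*\<^sub>J\<close>, with \<open>|c\<^sub>J| \<ge> 1\<close>.\<close>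
lemma gso_le_integer_combination:
  fixes c :: "nat \<Rightarrow> int" and b :: "nat \<Rightarrow> nat \<Rightarrow> real"
  assumes "c J \<noteq> 0"
  defines "v \<equiv> (\<lambda>t. \<Sum>i\<in>{..J}. of_int (c i) * b i t)"
  shows "ip r (gso r b J) (gso r b J) \<le> ip r v v"
proof -
  let ?g = "gso r b J"
  have "ip r v ?g = (\<Sum>i\<in>{..J}. of_int (c i) * ip r (b i) ?g)"
    unfolding v_def by (simp add: ip_sum_left ip_scale_left)
  also have "\<dots> = of_int (c J) * ip r (b J) ?g"
    by (rule sum.remove[where x=J, THEN trans]) (auto simp: ip_basis_gso intro!: sum.neutral)
  finally have ip_v_g: "ip r v ?g = of_int (c J) * ip r ?g ?g" by (simp add: ip_basis_gso)
  define w where "w = (\<lambda>t. v t - of_int (c J) * ?g t)"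
  have v_w: "v = (\<lambda>t. w t + of_int (c J) * ?g t)" unfolding w_def by simp
  have "ip r w ?g = 0" unfolding w_def ip_diff_left ip_scale_left ip_v_g by simp
  then have v_sq: "ip r v v = ip r w w + (of_int (c J))\<^sup>2 * ip r ?g ?g"
    by (subst v_w, subst v_w) (simp add: ip_add_scaled_self)
  have "1 \<le> \<bar>real_of_int (c J)\<bar>" using assms(1) by linarith
  then have c_sq: "(1::real) \<le> (of_int (c J))\<^sup>2" by (metis abs_ge_zero one_le_power power2_abs)
  show ?thesis
    using v_sq mult_right_mono[OF c_sq ip_self_nonneg[of r ?g]] ip_self_nonneg[of r w] by simp
qed

lemma reduced_first_vector_le:
  assumes red: "reduced r b" and v: "v \<in> Defs.lattice r b" and nz: "\<exists>t<r. v t \<noteq> 0"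
  shows "ip r (b 0) (b 0) \<le> 2^(r-1) * ip r v v"
proof -
  obtain c :: "nat \<Rightarrow> int" where v_eq: "v = (\<lambda>t. \<Sum>i<r. of_int (c i) * b i t)"
    using v unfolding Defs.lattice_def by blast
  define I where "I = {i. i < r \<and> c i \<noteq> 0}"
  have "I \<noteq> {}"
  proof
    assume "I = {}"
    then have "v = (\<lambda>t. 0)" unfolding v_eq I_def by auto
    with nz show False by simp
  qed
  then have I: "finite I" "I \<noteq> {}" unfolding I_def by auto
  define J where "J = Max I"
  have J: "J < r" "c J \<noteq> 0" using Max_in[OF I] unfolding J_def I_def by auto
  have above_J: "c i = 0" if "J < i" "i < r" for i
  proof (rule ccontr)
    assume "c i \<noteq> 0"
    then have "i \<le> J" using Max_ge[OF I(1), of i] that(2) unfolding J_def I_def by auto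
    with that(1) show False by simp
  qed
  have v_J: "v = (\<lambda>t. \<Sum>i\<in>{..J}. of_int (c i) * b i t)"
    unfolding v_eq using J(1) above_J by (intro ext sum.mono_neutral_right) auto
  have "ip r (b 0) (b 0) \<le> 2^J * ip r (gso r b J) (gso r b J)"
    using reduced_first_le_gso[OF red J(1)] .
  also have "\<dots> \<le> 2^(r-1) * ip r (gso r b J) (gso r b J)"
    using J(1) ip_self_nonneg[of r "gso r b J"] by (intro mult_right_mono power_increasing) auto
  also have "\<dots> \<le> 2^(r-1) * ip r v v"
    using gso_le_integer_combination[where c=c and J=J and r=r and b=b, OF J(2)] unfolding v_J by simp
  finally show ?thesis .
qed

section \<open>Determinants of lattices\<close>

definition basis_mat :: "nat \<Rightarrow> (nat \<Rightarrow> nat \<Rightarrow> real) \<Rightarrow> real mat" where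
  "basis_mat r b = mat r r (\<lambda>(t,i). b i t)"

lemma basis_mat_carrier [simp]: "basis_mat r b \<in> carrier_mat r r"
  unfolding basis_mat_def by simp

lemma mat_mult_mat_index:
  assumes "i < r" "j < r"
  shows "(mat r r f * mat r r g) $$ (i,j) = (\<Sum>l<r. f (i,l) * g (l,j))"
  using assms by (simp add: scalar_prod_def atLeast0LessThan)

text \<open>The basis is the product of the Gram-Schmidt matrix and a unitriangular matrix, and
  the Gram matrix of the Gram-Schmidt vectors is diagonal.\<close>
lemma det_basis_mat_sq:
  "(det (basis_mat r b))\<^sup>2 = (\<Prod>i<r. ip r (gso r b i) (gso r b i))"
proof -
  define G where "G = mat r r (\<lambda>(t,i). gso r b i t)"
  define T where "T = mat r r (\<lambda>(j,i). if j < i then gs_mu r b i j else if j = i then 1 else (0::real))"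
  have GC: "G \<in> carrier_mat r r" and TC: "T \<in> carrier_mat r r" unfolding G_def T_def by auto
  have basis_GT: "basis_mat r b = G * T"
  proof (rule eq_matI)
    fix t i assume "t < dim_row (G * T)" "i < dim_col (G * T)"
    then have t: "t < r" and i: "i < r" using GC TC by auto
    have "(G * T) $$ (t,i) = (\<Sum>j<r. gso r b j t * (if j < i then gs_mu r b i j else if j = i then 1 else 0))"
      unfolding G_def T_def using t i by (subst mat_mult_mat_index) auto
    also have "\<dots> = (\<Sum>j\<in>{..<i} \<union> {i} \<union> {Suc i..<r}. gso r b j t * (if j < i then gs_mu r b i j else if j = i then 1 else 0))"
      using i by (intro sum.cong) auto
    also have "\<dots> = (\<Sum>j<i. gso r b j t * gs_mu r b i j) + gso r b i t"
      by (subst sum.union_disjoint, force, force, force)+ (auto intro!: sum.neutral)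
    also have "\<dots> = b i t" using basis_eq_gso_sum[of b i t r] by (simp add: mult.commute)
    finally show "basis_mat r b $$ (t,i) = (G * T) $$ (t,i)" unfolding basis_mat_def using t i by simp
  qed (use GC TC in \<open>auto simp: basis_mat_def\<close>)
  have "upper_triangular T" unfolding T_def upper_triangular_def by auto
  then have "det T = prod_list (diag_mat T)" using det_upper_triangular TC by blast
  also have "\<dots> = 1" unfolding prod_list_diag_prod T_def by (auto intro: prod.neutral)
  finally have "det (basis_mat r b) = det G" unfolding basis_GT using det_mult[OF GC TC] by simp
  moreover have "(det G)\<^sup>2 = (\<Prod>i<r. ip r (gso r b i) (gso r b i))"
  proof -
    have GG: "transpose_mat G * G \<in> carrier_mat r r" using GC by auto
    have "(det G)\<^sup>2 = det (transpose_mat G * G)"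
      using det_mult[of "transpose_mat G" r G] det_transpose[OF GC] GC by (simp add: power2_eq_square)
    moreover have gram: "(transpose_mat G * G) $$ (i,j) = ip r (gso r b i) (gso r b j)" if "i < r" "j < r" for i j
      using that GC unfolding G_def by (simp add: scalar_prod_def ip_def atLeast0LessThan)
    moreover have "upper_triangular (transpose_mat G * G)"
      unfolding upper_triangular_def using GC gram gso_orthogonal by auto
    then have "det (transpose_mat G * G) = prod_list (diag_mat (transpose_mat G * G))"
      using det_upper_triangular GG by blast
    ultimately show ?thesis
      unfolding prod_list_diag_prod using GC by (auto simp: atLeast0LessThan intro!: prod.cong)
  qed
  ultimately show ?thesis by simp
qed

lemma basis_mem_lattice: "i < r \<Longrightarrow> b i \<in> Defs.lattice r b"
  unfolding Defs.lattice_def mem_Collect_eq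
proof (intro exI[of _ "\<lambda>l. if l = i then 1 else 0"] ext)
  fix t assume "i < r"
  have "(\<Sum>l<r. real_of_int (if l = i then 1 else 0) * b l t) = (\<Sum>l<r. if l = i then b l t else 0)"
    by (rule sum.cong) auto
  then show "b i t = (\<Sum>l<r. real_of_int (if l = i then 1 else 0) * b l t)"
    using \<open>i < r\<close> by simp
qed

lemma lattice_eq_imp_basis_change:
  assumes "Defs.lattice r b = Defs.lattice r b'"
  obtains U :: "int mat" where "U \<in> carrier_mat r r" "basis_mat r b = basis_mat r b' * map_mat of_int U"
proof -
  have "\<forall>i<r. \<exists>c::nat\<Rightarrow>int. b i = (\<lambda>t. \<Sum>l<r. of_int (c l) * b' l t)"
    using basis_mem_lattice[of _ r b] assms unfolding Defs.lattice_def by blast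
  then obtain C where C: "\<And>i. i < r \<Longrightarrow> b i = (\<lambda>t. \<Sum>l<r. of_int (C i l) * b' l t)"
    by metis
  define U where "U = mat r r (\<lambda>(l,i). C i l)"
  have "basis_mat r b = basis_mat r b' * map_mat of_int U"
  proof (rule eq_matI)
    fix t i assume "t < dim_row (basis_mat r b' * map_mat of_int U)" "i < dim_col (basis_mat r b' * map_mat of_int U)"
    then have t: "t < r" and i: "i < r" unfolding U_def basis_mat_def by auto
    have "map_mat of_int U = mat r r (\<lambda>(l,i). real_of_int (C i l))"
      unfolding U_def by (rule eq_matI) auto
    then have "(basis_mat r b' * map_mat of_int U) $$ (t,i) = (\<Sum>l<r. b' l t * of_int (C i l))"
      unfolding basis_mat_def using t i by (simp add: scalar_prod_def atLeast0LessThan)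
    also have "\<dots> = b i t" using C[OF i] by (simp add: mult.commute)
    finally show "basis_mat r b $$ (t,i) = (basis_mat r b' * map_mat of_int U) $$ (t,i)"
      unfolding basis_mat_def using t i by simp
  qed (auto simp: basis_mat_def U_def)
  then show ?thesis using that[of U] unfolding U_def by auto
qed

text \<open>Each basis is an integral combination of the other, so the two change-of-basis
  determinants are integers with product \<open>1\<close>.\<close>
lemma lattice_eq_imp_det_sq_eq:
  assumes "Defs.lattice r b = Defs.lattice r b'" "det (basis_mat r b') \<noteq> 0"
  shows "(det (basis_mat r b))\<^sup>2 = (det (basis_mat r b'))\<^sup>2"
proof -
  obtain U where U: "U \<in> carrier_mat r r" "basis_mat r b = basis_mat r b' * map_mat of_int U"
    using lattice_eq_imp_basis_change[OF assms(1)] by blast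
  obtain V where V: "V \<in> carrier_mat r r" "basis_mat r b' = basis_mat r b * map_mat of_int V"
    using lattice_eq_imp_basis_change[OF assms(1)[symmetric]] by blast
  have dU: "det (basis_mat r b) = det (basis_mat r b') * of_int (det U)"
    using U det_mult[of "basis_mat r b'" r "map_mat of_int U"] by (simp add: of_int_hom.hom_det)
  have dV: "det (basis_mat r b') = det (basis_mat r b) * of_int (det V)"
    using V det_mult[of "basis_mat r b" r "map_mat of_int V"] by (simp add: of_int_hom.hom_det)
  have "real_of_int (det U * det V) = 1"
    using dU dV assms(2) by (simp add: field_simps)
  then have "det U * det V = 1" by (metis of_int_eq_1_iff)
  then have "(real_of_int (det U))\<^sup>2 = 1" by (auto simp: zmult_eq_1_iff)
  then show ?thesis using dU by (simp add: power_mult_distrib)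
qed

lemma reduced_first_vector_power_le:
  assumes red: "reduced r b"
  shows "(ip r (b 0) (b 0)) ^ r \<le> 2 powr (real r * (real r - 1) / 2) * (det (basis_mat r b))\<^sup>2"
proof -
  let ?N = "ip r (b 0) (b 0)"
  have "?N ^ r = (\<Prod>i<r. ?N)" by simp
  also have "\<dots> \<le> (\<Prod>i<r. 2^i * ip r (gso r b i) (gso r b i))"
    using reduced_first_le_gso[OF red] ip_self_nonneg by (intro prod_mono) auto
  also have "\<dots> = 2 ^ (\<Sum>i<r. i) * (det (basis_mat r b))\<^sup>2"
    by (simp add: prod.distrib det_basis_mat_sq power_sum)
  also have "(2::real) ^ (\<Sum>i<r. i) = 2 powr real (\<Sum>i<r. i)"
    by (rule powr_realpow[symmetric]) simp
  also have "real (\<Sum>i<r. i) = real r * (real r - 1) / 2"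
    by (induction r) (auto simp: field_simps)
  finally show ?thesis .
qed

lemma basis_first_vector_pos:
  assumes "det (basis_mat r b) \<noteq> 0" "0 < r"
  shows "0 < ip r (b 0) (b 0)"
proof -
  have "(\<Prod>i<r. ip r (gso r b i) (gso r b i)) \<noteq> 0"
    using assms(1) by (simp add: det_basis_mat_sq[symmetric])
  then have "ip r (gso r b 0) (gso r b 0) \<noteq> 0" using assms(2) by auto
  then show ?thesis using ip_self_nonneg[of r "b 0"] by (simp add: gso_0)
qed

section \<open>The lattices of the ILLL-algorithm\<close>

definition ILLL_basis :: "nat \<Rightarrow> nat \<Rightarrow> (nat \<Rightarrow> nat \<Rightarrow> real) \<Rightarrow> real \<Rightarrow> nat \<Rightarrow> nat \<Rightarrow> real" where
  "ILLL_basis m n A c i t =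
     (if i < n then (if t = i then 1 else 0)
      else if t < n then A t (i - n)
      else if t < n + m \<and> t = i then c else 0)"

lemma init_basis_eq_ILLL_basis: "init_basis m n A = ILLL_basis m n A (cfac m n 1)"
  by (intro ext) (simp add: init_basis_def ILLL_basis_def)

lemma scale_basis_ILLL_basis:
  "scale_basis m n (ILLL_basis m n A c) = ILLL_basis m n A (c / 2 powr (real (m+n) / real m))"
  by (intro ext) (auto simp: scale_basis_def ILLL_basis_def)

lemma lattice_scale_basis:
  "Defs.lattice r (scale_basis m n b) =
     (\<lambda>v t. if n \<le> t then v t / 2 powr (real (m+n) / real m) else v t) ` Defs.lattice r b"
proof -
  have "(\<lambda>t. \<Sum>i<r. of_int (c i) * scale_basis m n b i t)
      = (\<lambda>v t. if n \<le> t then v t / 2 powr (real (m+n) / real m) else v t)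
          (\<lambda>t. \<Sum>i<r. of_int (c i) * b i t)" for c :: "nat \<Rightarrow> int"
    by (intro ext) (auto simp: scale_basis_def sum_divide_distrib)
  then show ?thesis unfolding Defs.lattice_def by auto
qed

lemma cfac_pos: "0 < cfac m n k"
  unfolding cfac_def by simp

lemma cfac_Suc: "cfac m n (Suc k) = cfac m n k / 2 powr (real (m+n) / real m)"
proof -
  have "cfac m n (Suc k) = 2 powr ((- (real (m+n) + 3) / 4 - real k + 1) * (real (m+n) / real m)
                                  - real (m+n) / real m)"
    unfolding cfac_def by (simp add: powr_powr algebra_simps)
  then show ?thesis unfolding cfac_def by (simp add: powr_powr powr_diff)
qed

lemma det_ILLL_basis: "det (basis_mat (m+n) (ILLL_basis m n A c)) = c ^ m"
proof -
  have "upper_triangular (basis_mat (m+n) (ILLL_basis m n A c))"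
    unfolding upper_triangular_def basis_mat_def ILLL_basis_def by auto
  then have "det (basis_mat (m+n) (ILLL_basis m n A c))
      = prod_list (diag_mat (basis_mat (m+n) (ILLL_basis m n A c)))"
    using det_upper_triangular basis_mat_carrier by blast
  also have "\<dots> = (\<Prod>i=0..<m+n. if i < n then 1 else c)"
    unfolding prod_list_diag_prod basis_mat_def by (intro prod.cong) (auto simp: ILLL_basis_def)
  also have "\<dots> = (\<Prod>i=0..<n. if i < n then 1 else c) * (\<Prod>i=n..<m+n. if i < n then 1 else c)"
    by (rule prod.atLeastLessThan_concat[symmetric]) auto
  also have "\<dots> = c ^ m" by simp
  finally show ?thesis .
qed

lemma sum_lessThan_add: "(\<Sum>i<m+n. f i) = (\<Sum>i<n. f i) + (\<Sum>j<m. f (n + j :: nat))"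
  by (induction m) (auto simp: add_ac)

lemma ILLL_basis_lattice_vector:
  fixes s :: "nat \<Rightarrow> int" and p :: "nat \<Rightarrow> int"
  shows "(\<lambda>t. if t < n then (\<Sum>j<m. of_int (s j) * A t j) - of_int (p t)
              else if t < m + n then c * of_int (s (t - n)) else 0)
         \<in> Defs.lattice (m+n) (ILLL_basis m n A c)"
  unfolding Defs.lattice_def mem_Collect_eq
proof (intro exI[of _ "\<lambda>i. if i < n then - p i else s (i - n)"] ext)
  fix t
  let ?e = "\<lambda>i. if i < n then - p i else s (i - n)" and ?B = "ILLL_basis m n A c"
  have "(\<Sum>i<n. real_of_int (?e i) * ?B i t) = (\<Sum>i<n. if i = t then - of_int (p i) else 0)"
    by (rule sum.cong) (auto simp: ILLL_basis_def)
  also have "\<dots> = (if t < n then - of_int (p t) else 0)"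
    by (simp add: sum.delta')
  finally have first: "(\<Sum>i<n. real_of_int (?e i) * ?B i t) = (if t < n then - of_int (p t) else 0)" .
  have "(\<Sum>j<m. real_of_int (?e (n+j)) * ?B (n+j) t)
      = (\<Sum>j<m. if t < n then of_int (s j) * A t j
                else if j = t - n \<and> t < m + n then c * of_int (s j) else 0)"
    by (rule sum.cong) (auto simp: ILLL_basis_def)
  also have "\<dots> = (if t < n then (\<Sum>j<m. of_int (s j) * A t j)
                   else if t < m + n then c * of_int (s (t - n)) else 0)"
    by (auto simp: sum.delta' intro: sum.neutral)
  finally have second: "(\<Sum>j<m. real_of_int (?e (n+j)) * ?B (n+j) t)
      = (if t < n then (\<Sum>j<m. of_int (s j) * A t j) else if t < m + n then c * of_int (s (t - n)) else 0)" .
  show "(if t < n then (\<Sum>j<m. of_int (s j) * A t j) - of_int (p t)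
          else if t < m + n then c * of_int (s (t - n)) else 0)
      = (\<Sum>i<m+n. real_of_int (?e i) * ?B i t)"
    unfolding sum_lessThan_add first second by auto
qed

lemma ILLL_run_lattice:
  assumes run: "ILLL_run m n A qmax L qs" and "1 \<le> k" "int k \<le> kprime m n qmax"
  shows "Defs.lattice (m+n) (L k) = Defs.lattice (m+n) (ILLL_basis m n A (cfac m n k))"
  using assms(2,3)
proof (induction k)
  case 0 then show ?case by simp
next
  case (Suc k)
  show ?case
  proof (cases "k = 0")
    case True
    then show ?thesis using run Suc.prems unfolding ILLL_run_def by (simp add: init_basis_eq_ILLL_basis)
  next
    case False
    have "Defs.lattice (m+n) (L (Suc k)) = Defs.lattice (m+n) (scale_basis m n (L k))"
      using run Suc.prems False unfolding ILLL_run_def by simp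
    also have "\<dots> = Defs.lattice (m+n) (scale_basis m n (ILLL_basis m n A (cfac m n k)))"
      unfolding lattice_scale_basis using Suc False by simp
    also have "\<dots> = Defs.lattice (m+n) (ILLL_basis m n A (cfac m n (Suc k)))"
      by (simp add: scale_basis_ILLL_basis cfac_Suc)
    finally show ?thesis .
  qed
qed

lemma dnint_le: "dnint x \<le> \<bar>x - of_int p\<bar>"
  unfolding dnint_def by (rule round_diff_minimal)

lemma Max_image_lessThan_attained:
  fixes f :: "nat \<Rightarrow> 'a::linorder"
  shows "0 < m \<Longrightarrow> \<exists>j<m. Max (f ` {..<m}) = f j"
  using Max_in[of "f ` {..<m}"] by fastforce

lemma power_mult_lt_of_coordinate_bounds:
  fixes \<gamma> c Q E N :: real
  assumes n: "1 \<le> n" and \<gamma>: "0 < \<gamma>" and c: "0 < c" and Q: "0 \<le> Q" and E: "0 \<le> E"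
    and \<gamma>_lt: "\<gamma> < Q powr (real m / real n) * E"
    and cQ_sq: "(c * Q)\<^sup>2 \<le> N" and E_sq: "E\<^sup>2 \<le> N"
  shows "\<gamma> ^ (2*n) * c ^ (2*m) < N ^ (m+n)"
proof -
  have "Q \<noteq> 0" using \<gamma> \<gamma>_lt by (cases "Q = 0") auto
  with Q have Q_pos: "0 < Q" by simp
  have "\<gamma> ^ n < (Q powr (real m / real n) * E) ^ n"
    using \<gamma> \<gamma>_lt n by (intro power_strict_mono) auto
  also have "\<dots> = (Q powr (real m / real n)) ^ n * E ^ n"
    by (simp add: power_mult_distrib)
  also have "(Q powr (real m / real n)) ^ n = Q ^ m"
    using Q_pos n by (simp add: powr_power powr_realpow)
  finally have \<gamma>_n: "\<gamma> ^ n < Q ^ m * E ^ n" .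
  have "\<gamma> ^ (2*n) * c ^ (2*m) = (\<gamma> ^ n)\<^sup>2 * c ^ (2*m)"
    by (simp add: power_mult mult.commute)
  also have "\<dots> < (Q ^ m * E ^ n)\<^sup>2 * c ^ (2*m)"
    using \<gamma> \<gamma>_n c by (intro mult_strict_right_mono power_strict_mono) auto
  also have "\<dots> = ((c * Q)\<^sup>2) ^ m * (E\<^sup>2) ^ n"
    by (simp add: power_mult_distrib flip: power_mult) (simp add: mult.commute)
  also have "\<dots> \<le> N ^ m * N ^ n"
  proof -
    have "0 \<le> N" using E_sq zero_le_power2[of E] by linarith
    then show ?thesis using cQ_sq E_sq E by (intro mult_mono power_mono) auto
  qed
  finally show ?thesis by (simp add: power_add)
qed

lemma sq_le_of_powr_mult_le:
  fixes x E \<delta> a :: real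
  assumes "0 < x" "0 \<le> E" "x powr a * E \<le> \<delta>"
  shows "E\<^sup>2 \<le> \<delta>\<^sup>2 * x powr (- (2 * a))"
proof -
  have "E \<le> \<delta> * x powr (- a)" using assms by (simp add: powr_minus field_simps)
  then have "E\<^sup>2 \<le> (\<delta> * x powr (- a))\<^sup>2" using assms(2) by (intro power_mono) auto
  also have "\<dots> = \<delta>\<^sup>2 * x powr (- (2 * a))"
    using assms(1) by (simp add: power_mult_distrib powr_realpow[symmetric] powr_powr mult.commute)
  finally show ?thesis .
qed

locale ILLL_iteration =
  fixes m n :: nat and A :: "nat \<Rightarrow> nat \<Rightarrow> real" and qmax :: real
    and L :: "nat \<Rightarrow> nat \<Rightarrow> nat \<Rightarrow> real" and qs :: "nat \<Rightarrow> nat \<Rightarrow> int" and k :: nat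
  assumes m_pos: "1 \<le> m" and n_pos: "1 \<le> n"
    and run: "ILLL_run m n A qmax L qs"
    and k_ge_1: "1 \<le> k" and k_le_kprime: "int k \<le> kprime m n qmax"
begin

lemma reduced_L: "reduced (m+n) (L k)"
  using run k_ge_1 k_le_kprime unfolding ILLL_run_def by blast

lemma lattice_L: "Defs.lattice (m+n) (L k) = Defs.lattice (m+n) (ILLL_basis m n A (cfac m n k))"
  using ILLL_run_lattice[OF run k_ge_1 k_le_kprime] .

lemma det_sq_L: "(det (basis_mat (m+n) (L k)))\<^sup>2 = (cfac m n k) ^ (2*m)"
  using lattice_eq_imp_det_sq_eq[OF lattice_L] det_ILLL_basis[of m n A] cfac_pos[of m n k]
  by (simp add: power_mult[symmetric] mult.commute)

lemma first_vector_power_le: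
  "(ip (m+n) (L k 0) (L k 0)) ^ (m+n)
     \<le> 2 powr (real (m+n) * (real (m+n) - 1) / 2) * (cfac m n k) ^ (2*m)"
  using reduced_first_vector_power_le[OF reduced_L] by (simp add: det_sq_L)

lemma first_vector_pos: "0 < ip (m+n) (L k 0) (L k 0)"
proof (rule basis_first_vector_pos)
  show "det (basis_mat (m+n) (L k)) \<noteq> 0"
    using det_sq_L cfac_pos[of m n k] by (metis power_not_zero zero_power2 less_irrefl)
qed (use m_pos in simp)

lemma first_vector_coordinate:
  obtains p :: "nat \<Rightarrow> int" where
    "\<And>t. t < m+n \<Longrightarrow> L k 0 t = (if t < n then (\<Sum>j<m. of_int (qs k j) * A t j) - of_int (p t)
                                   else cfac m n k * of_int (qs k (t - n)))"
  using run k_ge_1 k_le_kprime unfolding ILLL_run_def by blast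

lemma coordinate_sq_le: "t < m+n \<Longrightarrow> (L k 0 t)\<^sup>2 \<le> ip (m+n) (L k 0) (L k 0)"
  unfolding ip_def power2_eq_square by (rule member_le_sum) auto

text \<open>The \<open>n\<close> upper coordinates of the first reduced vector are at least \<open>\<parallel>q\<^sub>1a\<^sub>i\<^sub>1 + \<dots>\<parallel>\<close> in absolute value,
  and one of its \<open>m\<close> lower coordinates is \<open>c(k) max\<^sub>j |q\<^sub>j|\<close>.\<close>
lemma first_vector_lower_bound:
  fixes \<gamma> :: real
  assumes "0 < \<gamma>"
    and "\<gamma> < real_of_int (Max ((\<lambda>j. \<bar>qs k j\<bar>) ` {..<m})) powr (real m / real n)
            * Max ((\<lambda>i. dnint (\<Sum>j<m. of_int (qs k j) * A i j)) ` {..<n})"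
  shows "\<gamma> ^ (2*n) * (cfac m n k) ^ (2*m) < (ip (m+n) (L k 0) (L k 0)) ^ (m+n)"
proof -
  define N where "N = ip (m+n) (L k 0) (L k 0)"
  define c where "c = cfac m n k"
  define Q where "Q = real_of_int (Max ((\<lambda>j. \<bar>qs k j\<bar>) ` {..<m}))"
  define E where "E = Max ((\<lambda>i. dnint (\<Sum>j<m. of_int (qs k j) * A i j)) ` {..<n})"
  obtain p where p: "\<And>t. t < m+n \<Longrightarrow> L k 0 t = (if t < n then (\<Sum>j<m. of_int (qs k j) * A t j) - of_int (p t)
                                   else c * of_int (qs k (t - n)))"
    using first_vector_coordinate unfolding c_def by blast
  have "\<exists>i<n. E = dnint (\<Sum>j<m. of_int (qs k j) * A i j)"
    unfolding E_def using n_pos by (intro Max_image_lessThan_attained) simp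
  then obtain i where i: "i < n" "E = dnint (\<Sum>j<m. of_int (qs k j) * A i j)" by blast
  have "\<exists>j<m. Max ((\<lambda>j. \<bar>qs k j\<bar>) ` {..<m}) = \<bar>qs k j\<bar>"
    using m_pos by (intro Max_image_lessThan_attained) simp
  then obtain j where j: "j < m" "Q = \<bar>of_int (qs k j)\<bar>" unfolding Q_def by auto
  have E0: "0 \<le> E" using i unfolding dnint_def by simp
  have "E \<le> \<bar>L k 0 i\<bar>" using i p[of i] dnint_le by simp
  then have "E\<^sup>2 \<le> (L k 0 i)\<^sup>2" using E0 by (metis power2_abs power_mono)
  then have E_sq: "E\<^sup>2 \<le> N" using coordinate_sq_le[of i] i unfolding N_def by simp
  have cQ_sq: "(c * Q)\<^sup>2 \<le> N"
    using coordinate_sq_le[of "n+j"] p[of "n+j"] j unfolding N_def by (simp add: power_mult_distrib)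
  show ?thesis
    using power_mult_lt_of_coordinate_bounds[OF n_pos assms(1) _ _ E0 _ cQ_sq E_sq] assms(2) j(2)
      cfac_pos[of m n k] unfolding N_def c_def Q_def E_def by simp
qed

lemma first_vector_le_lattice:
  "v \<in> Defs.lattice (m+n) (ILLL_basis m n A (cfac m n k)) \<Longrightarrow> \<exists>t<m+n. v t \<noteq> 0
    \<Longrightarrow> ip (m+n) (L k 0) (L k 0) \<le> 2^(m+n-1) * ip (m+n) v v"
  using reduced_first_vector_le[OF reduced_L] lattice_L by blast

text \<open>Witness: the lattice vector built from \<open>s\<close> and the nearest integers of
  \<open>s\<^sub>1a\<^sub>i\<^sub>1 + \<dots>\<close>.\<close>
lemma first_vector_upper_bound:
  fixes s :: "nat \<Rightarrow> int"
  assumes "0 < Max ((\<lambda>j. \<bar>s j\<bar>) ` {..<m})"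
  shows "ip (m+n) (L k 0) (L k 0)
    \<le> 2^(m+n-1) * (real n * (Max ((\<lambda>i. dnint (\<Sum>j<m. of_int (s j) * A i j)) ` {..<n}))\<^sup>2
                  + real m * (cfac m n k * real_of_int (Max ((\<lambda>j. \<bar>s j\<bar>) ` {..<m})))\<^sup>2)"
proof -
  define c where "c = cfac m n k"
  define S where "S = real_of_int (Max ((\<lambda>j. \<bar>s j\<bar>) ` {..<m}))"
  define E where "E = Max ((\<lambda>i. dnint (\<Sum>j<m. of_int (s j) * A i j)) ` {..<n})"
  define v where "v = (\<lambda>t. if t < n then (\<Sum>j<m. of_int (s j) * A t j) - of_int (round (\<Sum>j<m. of_int (s j) * A t j))
                          else if t < m + n then c * of_int (s (t - n)) else 0)"
  have v_lattice: "v \<in> Defs.lattice (m+n) (ILLL_basis m n A c)"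
    unfolding v_def by (rule ILLL_basis_lattice_vector)
  obtain j where j: "j < m" "s j \<noteq> 0"
    using Max_image_lessThan_attained[of m "\<lambda>j. \<bar>s j\<bar>"] m_pos assms by fastforce
  then have v_nz: "v (n + j) \<noteq> 0" using cfac_pos[of m n k] unfolding v_def c_def by simp
  have "ip (m+n) v v = (\<Sum>t<n. (v t)\<^sup>2) + (\<Sum>j<m. (v (n+j))\<^sup>2)"
    unfolding ip_def by (simp add: sum_lessThan_add power2_eq_square)
  also have "\<dots> \<le> (\<Sum>t<n. E\<^sup>2) + (\<Sum>j<m. (c * S)\<^sup>2)"
  proof (intro add_mono sum_mono)
    fix t assume t: "t \<in> {..<n}"
    then have "\<bar>v t\<bar> = dnint (\<Sum>j<m. of_int (s j) * A t j)" unfolding v_def dnint_def by simp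
    also have "\<dots> \<le> E" unfolding E_def using t by (intro Max_ge) auto
    finally show "(v t)\<^sup>2 \<le> E\<^sup>2" by (metis abs_ge_zero power2_abs power_mono)
  next
    fix i assume i: "i \<in> {..<m}"
    then have "\<bar>s i\<bar> \<le> Max ((\<lambda>j. \<bar>s j\<bar>) ` {..<m})" by (auto intro: Max_ge)
    then have s_le: "\<bar>real_of_int (s i)\<bar> \<le> S" unfolding S_def by (metis of_int_abs of_int_le_iff)
    have "v (n+i) = c * of_int (s i)" using i unfolding v_def by simp
    then have "\<bar>v (n+i)\<bar> = c * \<bar>real_of_int (s i)\<bar>"
      using cfac_pos[of m n k] unfolding c_def by (simp add: abs_mult)
    also have "\<dots> \<le> c * S"
      using s_le cfac_pos[of m n k] unfolding c_def by (intro mult_left_mono) auto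
    finally have "\<bar>v (n+i)\<bar> \<le> c * S" .
    then show "(v (n+i))\<^sup>2 \<le> (c * S)\<^sup>2" by (metis abs_ge_zero power2_abs power_mono)
  qed
  finally have v_le: "ip (m+n) v v \<le> real n * E\<^sup>2 + real m * (c * S)\<^sup>2" by simp
  have "\<exists>t<m+n. v t \<noteq> 0" using v_nz j by (intro exI[of _ "n+j"]) simp
  then have "ip (m+n) (L k 0) (L k 0) \<le> 2^(m+n-1) * ip (m+n) v v"
    using first_vector_le_lattice v_lattice unfolding c_def by blast
  also have "\<dots> \<le> 2^(m+n-1) * (real n * E\<^sup>2 + real m * (c * S)\<^sup>2)"
    using v_le by (intro mult_left_mono) auto
  finally show ?thesis unfolding E_def S_def c_def .
qed

lemma gamma_power_lt:
  fixes \<gamma> :: real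
  assumes "0 < \<gamma>"
    and "\<gamma> < real_of_int (Max ((\<lambda>j. \<bar>qs k j\<bar>) ` {..<m})) powr (real m / real n)
            * Max ((\<lambda>i. dnint (\<Sum>j<m. of_int (qs k j) * A i j)) ` {..<n})"
  shows "\<gamma> ^ (2*n) < 2 powr (real (m+n) * (real (m+n) - 1) / 2)"
proof -
  have "\<gamma> ^ (2*n) * (cfac m n k) ^ (2*m)
      < 2 powr (real (m+n) * (real (m+n) - 1) / 2) * (cfac m n k) ^ (2*m)"
    using first_vector_lower_bound[OF assms] first_vector_power_le by simp
  then show ?thesis using cfac_pos[of m n k] by simp
qed

lemma first_vector_le_of_small_approximation:
  fixes s :: "nat \<Rightarrow> int" and \<delta> :: real
  defines "S \<equiv> real_of_int (Max ((\<lambda>j. \<bar>s j\<bar>) ` {..<m}))"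
  assumes S_pos: "0 < S"
    and small: "S powr (real m / real n) * Max ((\<lambda>i. dnint (\<Sum>j<m. of_int (s j) * A i j)) ` {..<n}) \<le> \<delta>"
    and scale: "(cfac m n k * S)\<^sup>2 \<le> real n * \<delta>\<^sup>2 / real m * S powr (- (2 * real m / real n))"
  shows "ip (m+n) (L k 0) (L k 0) \<le> 2^(m+n) * (real n * \<delta>\<^sup>2 * S powr (- (2 * real m / real n)))"
proof -
  define E where "E = Max ((\<lambda>i. dnint (\<Sum>j<m. of_int (s j) * A i j)) ` {..<n})"
  define T where "T = real n * \<delta>\<^sup>2 * S powr (- (2 * real m / real n))"
  have "\<exists>i<n. E = dnint (\<Sum>j<m. of_int (s j) * A i j)"
    unfolding E_def using n_pos by (intro Max_image_lessThan_attained) simp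
  then have E0: "0 \<le> E" unfolding dnint_def by auto
  have "real n * E\<^sup>2 \<le> real n * (\<delta>\<^sup>2 * S powr (- (2 * (real m / real n))))"
    using sq_le_of_powr_mult_le[OF S_pos E0 small[folded E_def]] by (intro mult_left_mono) auto
  moreover have "real m * (cfac m n k * S)\<^sup>2 \<le> real m * (real n * \<delta>\<^sup>2 / real m * S powr (- (2 * real m / real n)))"
    using scale by (intro mult_left_mono) auto
  ultimately have "real n * E\<^sup>2 + real m * (cfac m n k * S)\<^sup>2 \<le> T + T"
    unfolding T_def using m_pos by simp
  moreover have "ip (m+n) (L k 0) (L k 0) \<le> 2^(m+n-1) * (real n * E\<^sup>2 + real m * (cfac m n k * S)\<^sup>2)"
    using first_vector_upper_bound[of s] S_pos unfolding E_def S_def by simp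
  ultimately have "ip (m+n) (L k 0) (L k 0) \<le> 2^(m+n-1) * (T + T)"
    by (smt (verit) mult_left_mono zero_le_power)
  also have "\<dots> = 2^(m+n) * T"
    using m_pos by (cases "m+n") auto
  finally show ?thesis unfolding T_def .
qed

end

section \<open>Choice of the iteration and the threshold \<open>\<delta>\<close>\<close>

lemma log2_cfac: "log 2 (cfac m n k) = (- (real (m+n) + 3) / 4 - real k + 1) * (real (m+n) / real m)"
  unfolding cfac_def by (simp add: powr_powr)

lemma cfac_ceiling_bounds:
  assumes "1 \<le> m" "0 < y"
  shows "(- (real (m+n) + 3) / 4 - y) * (real (m+n) / real m) < log 2 (cfac m n (nat \<lceil>y\<rceil>))"
    and "log 2 (cfac m n (nat \<lceil>y\<rceil>)) \<le> (- (real (m+n) + 3) / 4 - y + 1) * (real (m+n) / real m)"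
proof -
  define k where "k = nat \<lceil>y\<rceil>"
  have k: "y \<le> real k" "real k < y + 1" unfolding k_def using assms(2) by linarith+
  have pos: "0 < real (m+n) / real m" using assms(1) by simp
  show "(- (real (m+n) + 3) / 4 - y) * (real (m+n) / real m) < log 2 (cfac m n (nat \<lceil>y\<rceil>))"
    unfolding log2_cfac k_def[symmetric] using k pos by (intro mult_strict_right_mono) auto
  show "log 2 (cfac m n (nat \<lceil>y\<rceil>)) \<le> (- (real (m+n) + 3) / 4 - y + 1) * (real (m+n) / real m)"
    unfolding log2_cfac k_def[symmetric] using k pos by (intro mult_right_mono) auto
qed

text \<open>With \<open>y\<close> as below, \<open>c(y)\<^sup>2 s\<^bsup>2(m+n)/n\<^esup> = D\<close> if \<open>c\<close> is extended to real indices;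
  the window for \<open>s\<close> is exactly what makes \<open>1 \<le> \<lceil>y\<rceil> \<le> k'\<close>.\<close>
lemma ILLL_window_index_bounds:
  fixes D S qmax :: real
  assumes m: "1 \<le> m" and n: "1 \<le> n" and qmax: "1 < qmax" and D: "0 < D"
    and lower: "2 powr ((real (m+n) - 1) * real n / (4 * real m)) * D powr (real n / (2 * real (m+n))) < S"
    and upper: "S < 2 powr (- (real m ^ 2 + real m * (real n - 1) + 4 * real n) / (4 * real m))
                  * D powr (real n / (2 * real (m+n))) * qmax"
  defines "y \<equiv> 1 - (real (m+n) + 3) / 4 - real m * log 2 D / (2 * real (m+n)) + real m / real n * log 2 S"
  shows "0 < y"
    and "y < - (real (m+n) - 1) * real (m+n) / (4 * real n) - 1 + real m * log 2 qmax / real n"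
proof -
  define r where "r = real (m+n)"
  have mpos: "0 < real m" and npos: "0 < real n" and r_eq: "r = real m + real n" and rpos: "0 < r"
    using m n unfolding r_def by auto
  have S: "0 < S" using lower D by (smt (verit) powr_gt_zero mult_pos_pos)
  define \<sigma> where "\<sigma> = log 2 S"
  define \<rho> where "\<rho> = log 2 D / (2 * r)"
  have y_eq: "y = 1 - (r + 3) / 4 - real m * \<rho> + real m / real n * \<sigma>"
    unfolding y_def \<rho>_def \<sigma>_def r_def by simp
  have \<sigma>_lower: "(r - 1) * real n / (4 * real m) + real n * \<rho> < \<sigma>"
    using lower D S rpos unfolding \<sigma>_def \<rho>_def r_def
    by (subst (asm) log_less_cancel_iff[of 2, symmetric]) (auto simp: log_mult_pos log_powr)
  have \<sigma>_upper: "\<sigma> < - (real m ^ 2 + real m * (real n - 1) + 4 * real n) / (4 * real m)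
                     + real n * \<rho> + log 2 qmax"
    using upper D S qmax rpos unfolding \<sigma>_def \<rho>_def r_def
    by (subst (asm) log_less_cancel_iff[of 2, symmetric]) (auto simp: log_mult_pos log_powr)
  have "(r - 1) / 4 + real m * \<rho> = real m / real n * ((r - 1) * real n / (4 * real m) + real n * \<rho>)"
    using mpos npos by (simp add: field_simps)
  also have "\<dots> < real m / real n * \<sigma>"
    using \<sigma>_lower mpos npos by (intro mult_strict_left_mono) auto
  finally show "0 < y" unfolding y_eq by (simp add: field_simps)
  have "y < (1 - (r + 3) / 4 - real m * \<rho>) + real m / real n * (- (real m ^ 2 + real m * (real n - 1)
              + 4 * real n) / (4 * real m) + real n * \<rho> + log 2 qmax)"
    unfolding y_eq using \<sigma>_upper mpos npos by (intro add_strict_left_mono mult_strict_left_mono) auto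
  also have "\<dots> = - (r - 1) * r / (4 * real n) - 1 + real m * log 2 qmax / real n"
    using mpos npos r_eq by (simp add: field_simps power2_eq_square)
  finally show "y < - (real (m+n) - 1) * real (m+n) / (4 * real n) - 1 + real m * log 2 qmax / real n"
    unfolding r_def .
qed

lemma exists_ILLL_iteration_bracketing:
  fixes D S qmax :: real
  assumes m: "1 \<le> m" and n: "1 \<le> n" and qmax: "1 < qmax" and D: "0 < D"
    and lower: "2 powr ((real (m+n) - 1) * real n / (4 * real m)) * D powr (real n / (2 * real (m+n))) < S"
    and upper: "S < 2 powr (- (real m ^ 2 + real m * (real n - 1) + 4 * real n) / (4 * real m))
                  * D powr (real n / (2 * real (m+n))) * qmax"
  obtains k where "1 \<le> k" "int k \<le> kprime m n qmax"
    and "(cfac m n k * S)\<^sup>2 \<le> D * S powr (- (2 * real m / real n))"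
    and "D * S powr (- (2 * real m / real n)) < 2 powr (2 * real (m+n) / real m) * (cfac m n k * S)\<^sup>2"
proof -
  define y where "y = 1 - (real (m+n) + 3) / 4 - real m * log 2 D / (2 * real (m+n)) + real m / real n * log 2 S"
  note y_bounds = ILLL_window_index_bounds[OF assms, folded y_def]
  define k where "k = nat \<lceil>y\<rceil>"
  define r where "r = real (m+n)"
  define \<rho> where "\<rho> = log 2 D / (2 * r)"
  have mpos: "0 < real m" and npos: "0 < real n" and r_eq: "r = real m + real n" and rpos: "0 < r"
    using m n unfolding r_def by auto
  have log_D: "log 2 D = 2 * r * \<rho>" unfolding \<rho>_def using rpos by simp
  have y_eq: "y = 1 - (r + 3) / 4 - real m * \<rho> + real m / real n * log 2 S"
    unfolding y_def \<rho>_def r_def by simp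
  have S: "0 < S" using lower D by (smt (verit) powr_gt_zero mult_pos_pos)
  have "1 \<le> k" unfolding k_def using y_bounds(1) by linarith
  moreover have "int k \<le> kprime m n qmax"
    using y_bounds unfolding kprime_def k_def by (simp add: ceiling_mono)
  moreover have "(cfac m n k * S)\<^sup>2 \<le> D * S powr (- (2 * real m / real n))"
  proof -
    have "2 * log 2 (cfac m n k) + 2 * log 2 S
        \<le> 2 * ((- (real (m+n) + 3) / 4 - y + 1) * (real (m+n) / real m)) + 2 * log 2 S"
      using cfac_ceiling_bounds(2)[OF m y_bounds(1), where n=n] unfolding k_def by simp
    also have "\<dots> = log 2 D - 2 * real m / real n * log 2 S"
      unfolding log_D y_eq r_def[symmetric] using mpos npos r_eq by (simp add: field_simps)
    finally show ?thesis using cfac_pos[of m n k] S D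
      by (subst log_le_cancel_iff[of 2, symmetric]) (auto simp: log_mult_pos log_powr log_nat_power)
  qed
  moreover have "D * S powr (- (2 * real m / real n)) < 2 powr (2 * real (m+n) / real m) * (cfac m n k * S)\<^sup>2"
  proof -
    have "log 2 D - 2 * real m / real n * log 2 S
        = 2 * real (m+n) / real m + 2 * ((- (real (m+n) + 3) / 4 - y) * (real (m+n) / real m)) + 2 * log 2 S"
      unfolding log_D y_eq r_def[symmetric] using mpos npos r_eq by (simp add: field_simps)
    also have "\<dots> < 2 * real (m+n) / real m + 2 * log 2 (cfac m n k) + 2 * log 2 S"
      using cfac_ceiling_bounds(1)[OF m y_bounds(1), where n=n] unfolding k_def by simp
    finally show ?thesis using cfac_pos[of m n k] S D
      by (subst log_less_cancel_iff[of 2, symmetric]) (auto simp: log_mult_pos log_powr log_nat_power)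
  qed
  ultimately show ?thesis using that by blast
qed

lemma log2_delta:
  fixes \<gamma> :: real
  assumes "1 \<le> m" "1 \<le> n" "0 < \<gamma>"
  defines "r \<equiv> real (m+n)"
  shows "2 * real n * log 2 (2 powr (- (real (m+n) * (real m ^ 2 + real m * (3 * real n - 1) + 4 * real n
                        + 2 * real n ^ 2)) / (4 * real n ^ 2))
              * real m powr (- real m / (2 * real n)) * real n powr (- 1 / 2)
              * \<gamma> powr (real (m+n) / real n))
    = - (r * r + 2 * r + real m * r * (r - 1) / (2 * real n))
      - real m * log 2 (real m) - real n * log 2 (real n) + 2 * r * log 2 \<gamma>"
  using assms by (simp add: log_mult_pos log_powr field_simps power2_eq_square)

lemma delta_threshold:
  fixes \<gamma> \<delta> S c N :: real
  assumes m: "1 \<le> m" and n: "1 \<le> n" and \<gamma>: "0 < \<gamma>" and S: "0 < S" and c: "0 < c" and N: "0 < N"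
    and \<delta>: "\<delta> = 2 powr (- (real (m+n) * (real m ^ 2 + real m * (3 * real n - 1) + 4 * real n
                        + 2 * real n ^ 2)) / (4 * real n ^ 2))
              * real m powr (- real m / (2 * real n)) * real n powr (- 1 / 2)
              * \<gamma> powr (real (m+n) / real n)"
    and \<gamma>_small: "\<gamma> ^ (2*n) < 2 powr (real (m+n) * (real (m+n) - 1) / 2)"
    and N_lower: "\<gamma> ^ (2*n) * c ^ (2*m) < N ^ (m+n)"
    and N_upper: "N \<le> 2 ^ (m+n) * (real n * \<delta>\<^sup>2 * S powr (- (2 * real m / real n)))"
    and scale: "real n * \<delta>\<^sup>2 * S powr (- (2 * real m / real n))
                 < 2 powr (2 * real (m+n) / real m) * (real m * (c * S)\<^sup>2)"
  shows False
proof -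
  define r where "r = real (m+n)"
  have mpos: "0 < real m" and npos: "0 < real n" and r_eq: "r = real m + real n"
    using m n unfolding r_def by auto
  have \<delta>pos: "0 < \<delta>" unfolding \<delta> using \<gamma> mpos npos by simp
  define T where "T = real n * \<delta>\<^sup>2 * S powr (- (2 * real m / real n))"
  have Tpos: "0 < T" unfolding T_def using npos \<delta>pos S by simp
  define g where "g = log 2 \<gamma>"
  define e where "e = log 2 c"
  define u where "u = log 2 N"
  define t where "t = log 2 T"
  define \<sigma> where "\<sigma> = log 2 S"
  define lm where "lm = log 2 (real m)"
  define ln where "ln = log 2 (real n)"
  define Z where "Z = real m * r * (r - 1) / (2 * real n)"
  have log_\<delta>: "2 * real n * log 2 \<delta> = - (r * r + 2 * r + Z) - real m * lm - real n * ln + 2 * r * g"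
    unfolding \<delta> Z_def lm_def ln_def g_def r_def using log2_delta[OF m n \<gamma>] by simp
  have t_eq: "real n * t = real n * ln + 2 * real n * log 2 \<delta> - 2 * real m * \<sigma>"
    unfolding t_def T_def ln_def \<sigma>_def using npos \<delta>pos S
    by (simp add: log_mult_pos log_powr log_nat_power field_simps)
  have hermite: "2 * real n * g < r * (r - 1) / 2"
    using \<gamma>_small \<gamma> unfolding g_def r_def
    by (subst (asm) log_less_cancel_iff[of 2, symmetric]) (auto simp: log_nat_power)
  have lower: "2 * real n * g + 2 * real m * e < r * u"
    using N_lower \<gamma> c N unfolding g_def e_def u_def r_def
    by (subst (asm) log_less_cancel_iff[of 2, symmetric]) (auto simp: log_mult_pos log_nat_power)
  have upper: "u \<le> r + t"
    using N_upper N Tpos unfolding u_def t_def r_def T_def[symmetric]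
    by (subst (asm) log_le_cancel_iff[of 2, symmetric]) (auto simp: log_mult_pos log_nat_power)
  have "t < 2 * r / real m + lm + 2 * e + 2 * \<sigma>"
    using scale Tpos c S mpos unfolding t_def e_def \<sigma>_def lm_def r_def T_def[symmetric]
    by (subst (asm) log_less_cancel_iff[of 2, symmetric]) (auto simp: log_mult_pos log_nat_power)
  then have scale': "real m * t < 2 * r + real m * lm + 2 * real m * e + 2 * real m * \<sigma>"
    using mpos by (simp add: field_simps)
  have upper': "r * u \<le> r * r + r * t"
    using upper r_eq mpos npos by (simp add: mult_left_mono flip: distrib_left)
  have hermite': "2 * real m * g < Z"
  proof -
    have "real m / real n * (2 * real n * g) < real m / real n * (r * (r - 1) / 2)"
      using hermite mpos npos by (intro mult_strict_left_mono) auto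
    then show ?thesis unfolding Z_def using npos by (simp add: field_simps)
  qed
  have "r * t = real m * t + real n * t" "r * g = real m * g + real n * g"
    using r_eq by (simp_all add: algebra_simps)
  then show False
    using lower upper' scale' t_eq log_\<delta> hermite' by linarith
qed

theorem theorem3:
  fixes m n :: nat and A :: "nat \<Rightarrow> nat \<Rightarrow> real" and qmax \<gamma> :: real
    and L :: "nat \<Rightarrow> nat \<Rightarrow> nat \<Rightarrow> real" and qs :: "nat \<Rightarrow> nat \<Rightarrow> int"
    and s :: "nat \<Rightarrow> int"
  assumes "m \<ge> 1" and "n \<ge> 1" and "qmax > 1" and "\<gamma> > 0"
    and run: "ILLL_run m n A qmax L qs"
    and hyp: "\<forall>k. 1 \<le> k \<and> int k \<le> kprime m n qmax \<longrightarrow>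
         real_of_int (Max ((\<lambda>j. \<bar>qs k j\<bar>) ` {..<m})) powr (real m / real n)
         * Max ((\<lambda>i. dnint (\<Sum>j<m. of_int (qs k j) * A i j)) ` {..<n}) > \<gamma>"
  defines "\<delta> \<equiv> 2 powr (- (real (m+n) * (real m ^ 2 + real m * (3 * real n - 1) + 4 * real n
                        + 2 * real n ^ 2)) / (4 * real n ^ 2))
              * real m powr (- real m / (2 * real n)) * real n powr (- 1 / 2)
              * \<gamma> powr (real (m+n) / real n)"
  defines "S \<equiv> real_of_int (Max ((\<lambda>j. \<bar>s j\<bar>) ` {..<m}))"
  assumes lower: "2 powr ((real (m+n) - 1) * real n / (4 * real m))
                   * (real n * \<delta>^2 / real m) powr (real n / (2 * real (m+n))) < S"
    and upper: "S < 2 powr (- (real m ^ 2 + real m * (real n - 1) + 4 * real n) / (4 * real m))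
                   * (real n * \<delta>^2 / real m) powr (real n / (2 * real (m+n))) * qmax"
  shows "S powr (real m / real n) * Max ((\<lambda>i. dnint (\<Sum>j<m. of_int (s j) * A i j)) ` {..<n}) > \<delta>"
proof (rule ccontr)
  assume "\<not> ?thesis"
  then have small: "S powr (real m / real n) * Max ((\<lambda>i. dnint (\<Sum>j<m. of_int (s j) * A i j)) ` {..<n}) \<le> \<delta>"
    by simp
  have \<delta>_pos: "0 < \<delta>" and D_pos: "0 < real n * \<delta>\<^sup>2 / real m"
    using assms(1,2,4) unfolding \<delta>_def by auto
  have "0 < 2 powr ((real (m+n) - 1) * real n / (4 * real m))
              * (real n * \<delta>^2 / real m) powr (real n / (2 * real (m+n)))"
    using D_pos assms(1,2) by (intro mult_pos_pos) auto
  with lower have S_pos: "0 < S" by linarith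
  obtain k where k: "1 \<le> k" "int k \<le> kprime m n qmax"
    and scale_le: "(cfac m n k * S)\<^sup>2 \<le> real n * \<delta>\<^sup>2 / real m * S powr (- (2 * real m / real n))"
    and scale_gt: "real n * \<delta>\<^sup>2 / real m * S powr (- (2 * real m / real n))
                    < 2 powr (2 * real (m+n) / real m) * (cfac m n k * S)\<^sup>2"
    by (rule exists_ILLL_iteration_bracketing[OF assms(1-3) D_pos lower upper])
  interpret ILLL_iteration m n A qmax L qs k
    using assms(1,2) run k by unfold_locales
  have hyp_k: "\<gamma> < real_of_int (Max ((\<lambda>j. \<bar>qs k j\<bar>) ` {..<m})) powr (real m / real n)
            * Max ((\<lambda>i. dnint (\<Sum>j<m. of_int (qs k j) * A i j)) ` {..<n})"
    using hyp k by blast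
  have N_upper: "ip (m+n) (L k 0) (L k 0) \<le> 2^(m+n) * (real n * \<delta>\<^sup>2 * S powr (- (2 * real m / real n)))"
    using first_vector_le_of_small_approximation[of s] S_pos small scale_le unfolding S_def by blast
  have "real n * \<delta>\<^sup>2 * S powr (- (2 * real m / real n))
      < 2 powr (2 * real (m+n) / real m) * (real m * (cfac m n k * S)\<^sup>2)"
    using scale_gt assms(1) by (simp add: field_simps)
  then show False
    using delta_threshold[OF assms(1,2,4) S_pos cfac_pos first_vector_pos meta_eq_to_obj_eq[OF \<delta>_def]
        gamma_power_lt[OF assms(4) hyp_k] first_vector_lower_bound[OF assms(4) hyp_k] N_upper] by blast
qed

end
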